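(* Let $\mathscr G=(\mathscr V,\mathscr E)$ be a finite connected graph with $N$ vertices and $M\ge0$ an integer. The unique stationary distribution $\pi_Y$ of the immediate exchange model on $\mathscr C_{N,M}$ is reversible and $$\pi_Y(\xi)=\frac{\mu(\xi)}{\sum_{\eta\in\mathscr C_{N,M}}\mu(\eta)}\quad\text{where}\quad \mu(\xi)=\prod_{z\in\mathscr V}(\xi(z)+1).$$
   Context: $\mathscr C_{N,M}$ is the set of maps $\xi:\mathscr V\to\mathbb N$ with $\sum_x\xi(x)=M$. The immediate exchange model is the discrete-time Markov chain on $\mathscr C_{N,M}$: at each step an edge $(x,y)\in\mathscr E$ is chosen uniformly at random, independent $U_1$ uniform on $\{0,\dots,Y_t(x)\}$ and $U_2$ uniform on $\{0,\dots,Y_t(y)\}$ are drawn, and $Y_{t+1}(x)=Y_t(x)-U_1+U_2$, $Y_{t+1}(y)=Y_t(y)-U_2+U_1$, $Y_{t+1}(z)=Y_t(z)$ for $z\notin\{x,y\}$. This chain has a unique stationary distribution, denoted $\pi_Y$. *)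

theory Defs
  imports Complex_Main
begin

definition finite_connected_graph :: "'a set \<Rightarrow> ('a \<times> 'a) set \<Rightarrow> bool" where
  "finite_connected_graph V E \<longleftrightarrow>
     finite V \<and> V \<noteq> {} \<and> E \<subseteq> V \<times> V \<and> sym E \<and> irrefl E \<and>
     (\<forall>x\<in>V. \<forall>y\<in>V. (x, y) \<in> E\<^sup>*)"

definition configs :: "'a set \<Rightarrow> nat \<Rightarrow> ('a \<Rightarrow> nat) set" where
  "configs V M = {\<xi>. (\<forall>x. x \<notin> V \<longrightarrow> \<xi> x = 0) \<and> (\<Sum>x\<in>V. \<xi> x) = M}"

text \<open>An (ordered) edge
(x,y) in E is chosen uniformly; since E is symmetric and the update is symmetric in (x,y)
this is the same as choosing an undirected edge uniformly.  (If E is empty the chain stays put.)\<close>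
definition ie_step :: "('a \<times> 'a) set \<Rightarrow> ('a \<Rightarrow> nat) \<Rightarrow> ('a \<Rightarrow> nat) \<Rightarrow> real" where
  "ie_step E \<xi> \<eta> =
     (if E = {} then (if \<eta> = \<xi> then 1 else 0) else
      (1 / real (card E)) *
      (\<Sum>(x, y)\<in>E. \<Sum>u1\<in>{0..\<xi> x}. \<Sum>u2\<in>{0..\<xi> y}.
          (if \<eta> = \<xi>(x := \<xi> x - u1 + u2, y := \<xi> y - u2 + u1)
           then 1 / (real (\<xi> x + 1) * real (\<xi> y + 1)) else 0)))"

definition stationary ::
  "'a set \<Rightarrow> ('a \<times> 'a) set \<Rightarrow> nat \<Rightarrow> (('a \<Rightarrow> nat) \<Rightarrow> real) \<Rightarrow> bool" where
  "stationary V E M \<pi> \<longleftrightarrow>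
     (\<forall>\<xi>\<in>configs V M. \<pi> \<xi> \<ge> 0) \<and> (\<Sum>\<xi>\<in>configs V M. \<pi> \<xi>) = 1 \<and>
     (\<forall>\<eta>\<in>configs V M. (\<Sum>\<xi>\<in>configs V M. \<pi> \<xi> * ie_step E \<xi> \<eta>) = \<pi> \<eta>)"

definition reversible ::
  "'a set \<Rightarrow> ('a \<times> 'a) set \<Rightarrow> nat \<Rightarrow> (('a \<Rightarrow> nat) \<Rightarrow> real) \<Rightarrow> bool" where
  "reversible V E M \<pi> \<longleftrightarrow>
     (\<forall>\<xi>\<in>configs V M. \<forall>\<eta>\<in>configs V M. \<pi> \<xi> * ie_step E \<xi> \<eta> = \<pi> \<eta> * ie_step E \<eta> \<xi>)"

definition mu :: "'a set \<Rightarrow> ('a \<Rightarrow> nat) \<Rightarrow> real" where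
  "mu V \<xi> = (\<Prod>z\<in>V. real (\<xi> z + 1))"

end

(* Detailed balance holds edge by edge. An exchange across the edge (x, y) picks the two
   amounts with probability 1 / ((xi x + 1) (xi y + 1)), and this denominator is exactly the
   factor by which mu xi exceeds the common product over the remaining vertices; undoing an
   exchange is the exchange with the two amounts swapped, so both directions are counted by
   equally many pairs. Hence mu is reversible and therefore invariant.
   For uniqueness, reversibility turns any invariant pi into a harmonic function pi / mu,
   whose maximum set is closed under the chain by the maximum principle. The chain is
   irreducible, since a single unit can be moved along any path of the connected graph, and
   moving units from surplus to deficit vertices reaches every configuration. So pi / mu is
   constant. *)

theory Submission
  imports Defs
begin

section \<open>Finite Markov kernels\<close>

definition irreducible_on :: "'s set \<Rightarrow> ('s \<Rightarrow> 's \<Rightarrow> real) \<Rightarrow> bool" where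
  "irreducible_on C P \<longleftrightarrow>
     (\<forall>S. S \<subseteq> C \<longrightarrow> S \<noteq> {} \<longrightarrow> (\<forall>\<eta>\<in>S. \<forall>\<xi>\<in>C. P \<eta> \<xi> > 0 \<longrightarrow> \<xi> \<in> S) \<longrightarrow> S = C)"

lemma detailed_balance_imp_invariant:
  fixes P :: "'s \<Rightarrow> 's \<Rightarrow> real"
  assumes balance: "\<And>\<xi> \<eta>. \<xi> \<in> C \<Longrightarrow> \<eta> \<in> C \<Longrightarrow> w \<xi> * P \<xi> \<eta> = w \<eta> * P \<eta> \<xi>"
    and stochastic: "(\<Sum>\<xi>\<in>C. P \<eta> \<xi>) = 1" and "\<eta> \<in> C"
  shows "(\<Sum>\<xi>\<in>C. w \<xi> * P \<xi> \<eta>) = w \<eta>"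
proof -
  have "(\<Sum>\<xi>\<in>C. w \<xi> * P \<xi> \<eta>) = (\<Sum>\<xi>\<in>C. w \<eta> * P \<eta> \<xi>)"
    using balance \<open>\<eta> \<in> C\<close> by (intro sum.cong) auto
  also have "\<dots> = w \<eta>"
    by (simp add: sum_distrib_left[symmetric] stochastic)
  finally show ?thesis .
qed

lemma invariant_ratio_harmonic:
  fixes P :: "'s \<Rightarrow> 's \<Rightarrow> real"
  assumes balance: "\<And>\<xi> \<eta>. \<xi> \<in> C \<Longrightarrow> \<eta> \<in> C \<Longrightarrow> w \<xi> * P \<xi> \<eta> = w \<eta> * P \<eta> \<xi>"
    and pos: "\<And>\<xi>. \<xi> \<in> C \<Longrightarrow> w \<xi> > 0"
    and invariant: "(\<Sum>\<xi>\<in>C. \<pi> \<xi> * P \<xi> \<eta>) = \<pi> \<eta>" and "\<eta> \<in> C"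
  shows "(\<Sum>\<xi>\<in>C. P \<eta> \<xi> * (\<pi> \<xi> / w \<xi>)) = \<pi> \<eta> / w \<eta>"
proof -
  have "w \<eta> * (\<Sum>\<xi>\<in>C. P \<eta> \<xi> * (\<pi> \<xi> / w \<xi>)) = (\<Sum>\<xi>\<in>C. \<pi> \<xi> / w \<xi> * (w \<eta> * P \<eta> \<xi>))"
    by (simp add: sum_distrib_left algebra_simps)
  also have "\<dots> = (\<Sum>\<xi>\<in>C. \<pi> \<xi> * P \<xi> \<eta>)"
  proof (rule sum.cong)
    fix \<xi> assume "\<xi> \<in> C"
    then show "\<pi> \<xi> / w \<xi> * (w \<eta> * P \<eta> \<xi>) = \<pi> \<xi> * P \<xi> \<eta>"
      using balance[OF \<open>\<xi> \<in> C\<close> \<open>\<eta> \<in> C\<close>, symmetric] pos[OF \<open>\<xi> \<in> C\<close>] by simp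
  qed simp
  finally show ?thesis
    using invariant pos[OF \<open>\<eta> \<in> C\<close>] by (simp add: field_simps)
qed

text \<open>An average of values not exceeding the maximum equals it only if no value of
  positive weight falls short.\<close>
lemma harmonic_argmax_closed:
  fixes P :: "'s \<Rightarrow> 's \<Rightarrow> real"
  assumes "finite C"
    and nonneg: "\<And>\<zeta>. \<zeta> \<in> C \<Longrightarrow> P \<eta> \<zeta> \<ge> 0"
    and stochastic: "(\<Sum>\<zeta>\<in>C. P \<eta> \<zeta>) = 1"
    and harmonic: "(\<Sum>\<zeta>\<in>C. P \<eta> \<zeta> * h \<zeta>) = h \<eta>"
    and le_max: "\<And>\<zeta>. \<zeta> \<in> C \<Longrightarrow> h \<zeta> \<le> h \<eta>"
    and "\<xi> \<in> C" "P \<eta> \<xi> > 0"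
  shows "h \<xi> = h \<eta>"
proof -
  have "(\<Sum>\<zeta>\<in>C. P \<eta> \<zeta> * (h \<eta> - h \<zeta>)) = h \<eta> * (\<Sum>\<zeta>\<in>C. P \<eta> \<zeta>) - (\<Sum>\<zeta>\<in>C. P \<eta> \<zeta> * h \<zeta>)"
    by (simp add: right_diff_distrib sum_subtractf sum_distrib_left mult_ac)
  also have "\<dots> = 0" by (simp add: stochastic harmonic)
  finally have "(\<Sum>\<zeta>\<in>C. P \<eta> \<zeta> * (h \<eta> - h \<zeta>)) = 0" .
  moreover have "P \<eta> \<zeta> * (h \<eta> - h \<zeta>) \<ge> 0" if "\<zeta> \<in> C" for \<zeta>
    using nonneg[OF that] le_max[OF that] by simp
  ultimately have "P \<eta> \<xi> * (h \<eta> - h \<xi>) = 0"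
    using sum_nonneg_eq_0_iff[OF \<open>finite C\<close>] \<open>\<xi> \<in> C\<close> by (metis (no_types, lifting))
  then show ?thesis using \<open>P \<eta> \<xi> > 0\<close> by simp
qed

lemma invariant_proportional_to_reversible:
  fixes P :: "'s \<Rightarrow> 's \<Rightarrow> real"
  assumes "finite C" and "irreducible_on C P"
    and nonneg: "\<And>\<xi> \<eta>. \<xi> \<in> C \<Longrightarrow> \<eta> \<in> C \<Longrightarrow> P \<xi> \<eta> \<ge> 0"
    and stochastic: "\<And>\<eta>. \<eta> \<in> C \<Longrightarrow> (\<Sum>\<xi>\<in>C. P \<eta> \<xi>) = 1"
    and balance: "\<And>\<xi> \<eta>. \<xi> \<in> C \<Longrightarrow> \<eta> \<in> C \<Longrightarrow> w \<xi> * P \<xi> \<eta> = w \<eta> * P \<eta> \<xi>"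
    and pos: "\<And>\<xi>. \<xi> \<in> C \<Longrightarrow> w \<xi> > 0"
    and invariant: "\<And>\<eta>. \<eta> \<in> C \<Longrightarrow> (\<Sum>\<xi>\<in>C. \<pi> \<xi> * P \<xi> \<eta>) = \<pi> \<eta>"
  shows "\<exists>c. \<forall>\<xi>\<in>C. \<pi> \<xi> = c * w \<xi>"
proof (cases "C = {}")
  case False
  define h where "h \<xi> = \<pi> \<xi> / w \<xi>" for \<xi>
  have "Max (h ` C) \<in> h ` C"
    using \<open>finite C\<close> False by simp
  then obtain \<eta> where \<eta>: "\<eta> \<in> C" "h \<eta> = Max (h ` C)" by auto
  have le_max: "h \<zeta> \<le> h \<eta>" if "\<zeta> \<in> C" for \<zeta>
    using \<eta> that \<open>finite C\<close> by simp
  define S where "S = {\<zeta> \<in> C. h \<zeta> = h \<eta>}"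
  have "S = C"
    using \<open>irreducible_on C P\<close> unfolding irreducible_on_def
  proof (elim allE impE)
    show "S \<subseteq> C" "S \<noteq> {}" using \<eta> by (auto simp: S_def)
    show "\<forall>\<zeta>\<in>S. \<forall>\<xi>\<in>C. P \<zeta> \<xi> > 0 \<longrightarrow> \<xi> \<in> S"
    proof (intro ballI impI)
      fix \<zeta> \<xi> assume "\<zeta> \<in> S" "\<xi> \<in> C" "P \<zeta> \<xi> > 0"
      then have "\<zeta> \<in> C" and max_at: "h \<zeta> = h \<eta>" by (auto simp: S_def)
      have "(\<Sum>\<xi>\<in>C. P \<zeta> \<xi> * h \<xi>) = h \<zeta>"
        unfolding h_def by (rule invariant_ratio_harmonic[OF balance pos invariant[OF \<open>\<zeta> \<in> C\<close>] \<open>\<zeta> \<in> C\<close>])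
      then have "h \<xi> = h \<zeta>"
        using le_max max_at
        by (intro harmonic_argmax_closed[where P = P and \<eta> = \<zeta> and h = h, OF \<open>finite C\<close>
            nonneg[OF \<open>\<zeta> \<in> C\<close>] stochastic[OF \<open>\<zeta> \<in> C\<close>] _ _ \<open>\<xi> \<in> C\<close> \<open>P \<zeta> \<xi> > 0\<close>]) auto
      then show "\<xi> \<in> S" using \<open>\<zeta> \<in> S\<close> \<open>\<xi> \<in> C\<close> by (simp add: S_def)
    qed
  qed
  have "\<pi> \<xi> = h \<eta> * w \<xi>" if "\<xi> \<in> C" for \<xi>
  proof -
    have "h \<xi> = h \<eta>" using \<open>S = C\<close> that by (auto simp: S_def)
    then show ?thesis using pos[OF that] by (simp add: h_def field_simps)
  qed
  then show ?thesis by blast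
qed simp

lemma normalized_reversible_weight_unique_stationary:
  fixes P :: "'s \<Rightarrow> 's \<Rightarrow> real"
  assumes "finite C" "C \<noteq> {}" "irreducible_on C P"
    and nonneg: "\<And>\<xi> \<eta>. \<xi> \<in> C \<Longrightarrow> \<eta> \<in> C \<Longrightarrow> P \<xi> \<eta> \<ge> 0"
    and stochastic: "\<And>\<eta>. \<eta> \<in> C \<Longrightarrow> (\<Sum>\<xi>\<in>C. P \<eta> \<xi>) = 1"
    and balance: "\<And>\<xi> \<eta>. \<xi> \<in> C \<Longrightarrow> \<eta> \<in> C \<Longrightarrow> w \<xi> * P \<xi> \<eta> = w \<eta> * P \<eta> \<xi>"
    and pos: "\<And>\<xi>. \<xi> \<in> C \<Longrightarrow> w \<xi> > 0"
  defines "\<pi>0 \<equiv> \<lambda>\<xi>. w \<xi> / (\<Sum>\<eta>\<in>C. w \<eta>)"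
  shows "\<And>\<xi>. \<xi> \<in> C \<Longrightarrow> \<pi>0 \<xi> > 0"
    and "(\<Sum>\<xi>\<in>C. \<pi>0 \<xi>) = 1"
    and "\<And>\<xi> \<eta>. \<xi> \<in> C \<Longrightarrow> \<eta> \<in> C \<Longrightarrow> \<pi>0 \<xi> * P \<xi> \<eta> = \<pi>0 \<eta> * P \<eta> \<xi>"
    and "\<And>\<eta>. \<eta> \<in> C \<Longrightarrow> (\<Sum>\<xi>\<in>C. \<pi>0 \<xi> * P \<xi> \<eta>) = \<pi>0 \<eta>"
    and "\<And>\<pi> \<xi>. (\<Sum>\<xi>\<in>C. \<pi> \<xi>) = 1 \<Longrightarrow> (\<And>\<eta>. \<eta> \<in> C \<Longrightarrow> (\<Sum>\<xi>\<in>C. \<pi> \<xi> * P \<xi> \<eta>) = \<pi> \<eta>) \<Longrightarrow>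
           \<xi> \<in> C \<Longrightarrow> \<pi> \<xi> = \<pi>0 \<xi>"
proof -
  have "(\<Sum>\<eta>\<in>C. w \<eta>) > 0"
    using pos by (intro sum_pos \<open>finite C\<close> \<open>C \<noteq> {}\<close>)
  then show pos0: "\<And>\<xi>. \<xi> \<in> C \<Longrightarrow> \<pi>0 \<xi> > 0" and sum_one: "(\<Sum>\<xi>\<in>C. \<pi>0 \<xi>) = 1"
    using pos by (simp_all add: \<pi>0_def sum_divide_distrib[symmetric])
  show balance0: "\<pi>0 \<xi> * P \<xi> \<eta> = \<pi>0 \<eta> * P \<eta> \<xi>" if "\<xi> \<in> C" "\<eta> \<in> C" for \<xi> \<eta>
    by (simp only: \<pi>0_def times_divide_eq_left balance[OF that])
  show "\<And>\<eta>. \<eta> \<in> C \<Longrightarrow> (\<Sum>\<xi>\<in>C. \<pi>0 \<xi> * P \<xi> \<eta>) = \<pi>0 \<eta>"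
    using balance0 stochastic by (rule detailed_balance_imp_invariant)
  fix \<pi> \<xi>
  assume "(\<Sum>\<xi>\<in>C. \<pi> \<xi>) = 1" "\<xi> \<in> C"
    and invariant: "\<And>\<eta>. \<eta> \<in> C \<Longrightarrow> (\<Sum>\<xi>\<in>C. \<pi> \<xi> * P \<xi> \<eta>) = \<pi> \<eta>"
  obtain c where c: "\<forall>\<xi>\<in>C. \<pi> \<xi> = c * \<pi>0 \<xi>"
    using invariant_proportional_to_reversible[OF \<open>finite C\<close> \<open>irreducible_on C P\<close> nonneg
        stochastic balance0 pos0 invariant] by blast
  have "1 = (\<Sum>\<xi>\<in>C. \<pi> \<xi>)" by (simp add: \<open>(\<Sum>\<xi>\<in>C. \<pi> \<xi>) = 1\<close>)
  also have "\<dots> = c" using c sum_one by (simp add: sum_distrib_left[symmetric])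
  finally show "\<pi> \<xi> = \<pi>0 \<xi>" using c \<open>\<xi> \<in> C\<close> by simp
qed

section \<open>The exchange kernel\<close>

abbreviation exchange :: "('a \<Rightarrow> nat) \<Rightarrow> 'a \<Rightarrow> 'a \<Rightarrow> nat \<Rightarrow> nat \<Rightarrow> 'a \<Rightarrow> nat" where
  "exchange \<xi> x y u1 u2 \<equiv> \<xi>(x := \<xi> x - u1 + u2, y := \<xi> y - u2 + u1)"

definition exchange_set :: "('a \<Rightarrow> nat) \<Rightarrow> 'a \<Rightarrow> 'a \<Rightarrow> ('a \<Rightarrow> nat) \<Rightarrow> (nat \<times> nat) set" where
  "exchange_set \<xi> x y \<eta> = {(u1, u2) \<in> {0..\<xi> x} \<times> {0..\<xi> y}. \<eta> = exchange \<xi> x y u1 u2}"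

definition exchange_kernel :: "('a \<Rightarrow> nat) \<Rightarrow> 'a \<Rightarrow> 'a \<Rightarrow> ('a \<Rightarrow> nat) \<Rightarrow> real" where
  "exchange_kernel \<xi> x y \<eta> =
     (\<Sum>u1\<in>{0..\<xi> x}. \<Sum>u2\<in>{0..\<xi> y}.
        if \<eta> = exchange \<xi> x y u1 u2 then 1 / (real (\<xi> x + 1) * real (\<xi> y + 1)) else 0)"

lemma ie_step_eq_exchange_kernel:
  assumes "E \<noteq> {}"
  shows "ie_step E \<xi> \<eta> = (\<Sum>(x, y)\<in>E. exchange_kernel \<xi> x y \<eta>) / real (card E)"
  using assms by (simp add: ie_step_def exchange_kernel_def)

lemma exchange_kernel_eq_card:
  "exchange_kernel \<xi> x y \<eta> = card (exchange_set \<xi> x y \<eta>) / (real (\<xi> x + 1) * real (\<xi> y + 1))"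
proof -
  let ?c = "1 / (real (\<xi> x + 1) * real (\<xi> y + 1))"
  have "exchange_kernel \<xi> x y \<eta> =
      (\<Sum>(u1, u2)\<in>{0..\<xi> x} \<times> {0..\<xi> y}. if \<eta> = exchange \<xi> x y u1 u2 then ?c else 0)"
    unfolding exchange_kernel_def by (rule sum.cartesian_product)
  also have "\<dots> = (\<Sum>p\<in>{0..\<xi> x} \<times> {0..\<xi> y}. if p \<in> exchange_set \<xi> x y \<eta> then ?c else 0)"
    by (intro sum.cong) (auto simp: exchange_set_def split: if_splits)
  also have "\<dots> = (\<Sum>p\<in>exchange_set \<xi> x y \<eta>. ?c)"
  proof -
    have "exchange_set \<xi> x y \<eta> \<subseteq> {0..\<xi> x} \<times> {0..\<xi> y}"
      by (auto simp: exchange_set_def)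
    then show ?thesis by (simp add: sum.If_cases Int_absorb1 Int_absorb2)
  qed
  finally show ?thesis by simp
qed

lemma finite_exchange_set: "finite (exchange_set \<xi> x y \<eta>)"
  by (rule finite_subset[of _ "{0..\<xi> x} \<times> {0..\<xi> y}"]) (auto simp: exchange_set_def)

lemma exchange_kernel_nonneg: "exchange_kernel \<xi> x y \<eta> \<ge> 0"
  by (simp add: exchange_kernel_eq_card)

text \<open>Undoing an exchange is again an exchange, with the two amounts swapped.\<close>
lemma card_exchange_set_swap:
  assumes "x \<noteq> y"
  shows "card (exchange_set \<xi> x y \<eta>) = card (exchange_set \<eta> x y \<xi>)"
proof (rule bij_betw_same_card)
  have swap_mem: "(u2, u1) \<in> exchange_set \<eta>' x y \<xi>'" if "(u1, u2) \<in> exchange_set \<xi>' x y \<eta>'"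
    for \<xi>' \<eta>' u1 u2
    using that assms by (auto simp: exchange_set_def)
  show "bij_betw prod.swap (exchange_set \<xi> x y \<eta>) (exchange_set \<eta> x y \<xi>)"
    unfolding bij_betw_def
  proof
    show "prod.swap ` exchange_set \<xi> x y \<eta> = exchange_set \<eta> x y \<xi>"
    proof (intro equalityI subsetI)
      fix p assume "p \<in> prod.swap ` exchange_set \<xi> x y \<eta>"
      then show "p \<in> exchange_set \<eta> x y \<xi>" using swap_mem by auto
    next
      fix p assume "p \<in> exchange_set \<eta> x y \<xi>"
      then have "prod.swap p \<in> exchange_set \<xi> x y \<eta>"
        using swap_mem[of "fst p" "snd p" \<eta> \<xi>] by (cases p) simp
      then show "p \<in> prod.swap ` exchange_set \<xi> x y \<eta>"
        by (metis image_eqI swap_swap)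
    qed
  qed simp
qed

lemma mu_split:
  assumes "finite V" "x \<in> V" "y \<in> V" "x \<noteq> y"
  shows "mu V \<xi> = real (\<xi> x + 1) * real (\<xi> y + 1) * (\<Prod>z\<in>V - {x, y}. real (\<xi> z + 1))"
  using prod.subset_diff[of "{x, y}" V "\<lambda>z. real (\<xi> z + 1)"] assms
  by (simp add: mu_def)

lemma mu_exchange_kernel_balance:
  assumes "finite V" "x \<in> V" "y \<in> V" "x \<noteq> y"
  shows "mu V \<xi> * exchange_kernel \<xi> x y \<eta> = mu V \<eta> * exchange_kernel \<eta> x y \<xi>"
proof (cases "exchange_set \<xi> x y \<eta> = {}")
  case True
  then show ?thesis
    using card_exchange_set_swap[OF \<open>x \<noteq> y\<close>, of \<xi> \<eta>]
    by (simp add: exchange_kernel_eq_card)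
next
  case False
  then have "\<eta> z = \<xi> z" if "z \<notin> {x, y}" for z
    using that by (auto simp: exchange_set_def)
  then have "(\<Prod>z\<in>V - {x, y}. real (\<xi> z + 1)) = (\<Prod>z\<in>V - {x, y}. real (\<eta> z + 1))"
    by (intro prod.cong) auto
  then show ?thesis
    using card_exchange_set_swap[OF \<open>x \<noteq> y\<close>, of \<xi> \<eta>]
    by (simp add: exchange_kernel_eq_card mu_split[OF assms])
qed

lemma finite_connected_graph_edge:
  assumes "finite_connected_graph V E" "(x, y) \<in> E"
  shows "x \<in> V" "y \<in> V" "x \<noteq> y"
  using assms by (auto simp: finite_connected_graph_def irrefl_def)

lemma finite_connected_graph_finite_edges:
  assumes "finite_connected_graph V E"
  shows "finite E"
  using assms finite_subset[of E "V \<times> V"] by (auto simp: finite_connected_graph_def)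

lemma mu_ie_step_balance:
  assumes "finite_connected_graph V E"
  shows "mu V \<xi> * ie_step E \<xi> \<eta> = mu V \<eta> * ie_step E \<eta> \<xi>"
proof (cases "E = {}")
  case False
  have "finite V" using assms by (simp add: finite_connected_graph_def)
  have "(\<Sum>(x, y)\<in>E. mu V \<xi> * exchange_kernel \<xi> x y \<eta>) = (\<Sum>(x, y)\<in>E. mu V \<eta> * exchange_kernel \<eta> x y \<xi>)"
    using mu_exchange_kernel_balance[OF \<open>finite V\<close>] finite_connected_graph_edge[OF assms]
    by (intro sum.cong) auto
  then show ?thesis
    using False by (simp add: ie_step_eq_exchange_kernel sum_distrib_left split_def)
qed (simp add: ie_step_def)

section \<open>Configurations\<close>

lemma finite_configs:
  assumes "finite V"
  shows "finite (configs V M)"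
proof (rule finite_subset)
  show "configs V M \<subseteq> {f. \<forall>x. (x \<in> V \<longrightarrow> f x \<in> {0..M}) \<and> (x \<notin> V \<longrightarrow> f x = 0)}"
    using member_le_sum[OF _ _ assms] by (fastforce simp: configs_def)
qed (rule finite_set_of_finite_funs[OF assms finite_atLeastAtMost])

lemma configs_nonempty:
  assumes "finite V" "v \<in> V"
  shows "configs V M \<noteq> {}"
proof -
  have "(\<lambda>z. if z = v then M else 0) \<in> configs V M"
    using assms by (simp add: configs_def sum.delta)
  then show ?thesis by blast
qed

lemma exchange_in_configs:
  assumes "finite V" "x \<in> V" "y \<in> V" "x \<noteq> y" "u1 \<le> \<xi> x" "u2 \<le> \<xi> y" "\<xi> \<in> configs V M"
  shows "exchange \<xi> x y u1 u2 \<in> configs V M"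
proof -
  have split: "sum f V = sum f (V - {x, y}) + f x + f y" for f :: "'a \<Rightarrow> nat"
    using sum.subset_diff[of "{x, y}" V f] assms(1-4) by simp
  have "sum (exchange \<xi> x y u1 u2) V =
      sum (exchange \<xi> x y u1 u2) (V - {x, y}) + exchange \<xi> x y u1 u2 x + exchange \<xi> x y u1 u2 y"
    by (rule split)
  also have "\<dots> = sum \<xi> (V - {x, y}) + \<xi> x + \<xi> y"
  proof -
    have "sum (exchange \<xi> x y u1 u2) (V - {x, y}) = sum \<xi> (V - {x, y})"
      by (intro sum.cong) auto
    then show ?thesis using assms(4-6) by simp
  qed
  also have "\<dots> = sum \<xi> V"
    by (rule split[symmetric])
  finally have "sum (exchange \<xi> x y u1 u2) V = sum \<xi> V" .
  then show ?thesis
    using assms(2,3,7) by (auto simp: configs_def)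
qed

lemma exchange_kernel_row_sum:
  assumes "finite V" "x \<in> V" "y \<in> V" "x \<noteq> y" "\<xi> \<in> configs V M"
  shows "(\<Sum>\<eta>\<in>configs V M. exchange_kernel \<xi> x y \<eta>) = 1"
proof -
  let ?c = "1 / (real (\<xi> x + 1) * real (\<xi> y + 1))"
  have "(\<Sum>\<eta>\<in>configs V M. exchange_kernel \<xi> x y \<eta>) =
      (\<Sum>u1\<in>{0..\<xi> x}. \<Sum>u2\<in>{0..\<xi> y}. \<Sum>\<eta>\<in>configs V M. if \<eta> = exchange \<xi> x y u1 u2 then ?c else 0)"
    unfolding exchange_kernel_def by (subst sum.swap, subst sum.swap) (rule refl)
  also have "\<dots> = (\<Sum>u1\<in>{0..\<xi> x}. \<Sum>u2\<in>{0..\<xi> y}. ?c)"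
    using exchange_in_configs[OF assms(1-4) _ _ assms(5)]
    by (intro sum.cong refl) (simp add: finite_configs[OF assms(1)])
  also have "\<dots> = 1" by simp
  finally show ?thesis .
qed

lemma ie_step_row_sum:
  assumes "finite_connected_graph V E" "\<xi> \<in> configs V M"
  shows "(\<Sum>\<eta>\<in>configs V M. ie_step E \<xi> \<eta>) = 1"
proof -
  have "finite V" using assms(1) by (simp add: finite_connected_graph_def)
  show ?thesis
  proof (cases "E = {}")
    case True
    then show ?thesis
      using assms(2) finite_configs[OF \<open>finite V\<close>] by (simp add: ie_step_def)
  next
    case False
    have "(\<Sum>\<eta>\<in>configs V M. \<Sum>(x, y)\<in>E. exchange_kernel \<xi> x y \<eta>) = (\<Sum>(x, y)\<in>E. 1)"
      using exchange_kernel_row_sum[OF \<open>finite V\<close> _ _ _ assms(2)] finite_connected_graph_edge[OF assms(1)]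
      by (subst sum.swap) (intro sum.cong, auto)
    then show ?thesis
      using False finite_connected_graph_finite_edges[OF assms(1)]
      by (simp add: ie_step_eq_exchange_kernel sum_divide_distrib[symmetric])
  qed
qed

lemma ie_step_nonneg: "ie_step E \<xi> \<eta> \<ge> 0"
proof (cases "E = {}")
  case False
  then show ?thesis
    unfolding ie_step_eq_exchange_kernel[OF False]
    by (intro divide_nonneg_nonneg sum_nonneg) (auto simp: exchange_kernel_nonneg split: prod.split)
qed (simp add: ie_step_def)

section \<open>Irreducibility\<close>

definition transfer :: "('a \<Rightarrow> nat) \<Rightarrow> 'a \<Rightarrow> 'a \<Rightarrow> 'a \<Rightarrow> nat" where
  "transfer \<xi> a b = (if a = b then \<xi> else \<xi>(a := \<xi> a - 1, b := \<xi> b + 1))"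

lemma transfer_eq_exchange:
  assumes "a \<noteq> b" "1 \<le> \<xi> a"
  shows "transfer \<xi> a b = exchange \<xi> a b 1 0"
  using assms by (simp add: transfer_def)

lemma transfer_in_configs:
  assumes "finite V" "a \<in> V" "b \<in> V" "1 \<le> \<xi> a" "\<xi> \<in> configs V M"
  shows "transfer \<xi> a b \<in> configs V M"
  using assms exchange_in_configs[OF assms(1-3), of 1 \<xi> 0]
  by (cases "a = b") (simp_all add: transfer_def)

lemma ie_step_transfer_pos:
  assumes "finite E" "(a, b) \<in> E" "a \<noteq> b" "1 \<le> \<xi> a"
  shows "ie_step E \<xi> (transfer \<xi> a b) > 0"
proof -
  let ?\<eta> = "transfer \<xi> a b"
  have "(1, 0) \<in> exchange_set \<xi> a b ?\<eta>"
    using assms(3,4) by (simp add: exchange_set_def transfer_eq_exchange)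
  then have "card (exchange_set \<xi> a b ?\<eta>) > 0"
    by (auto simp: card_gt_0_iff finite_exchange_set)
  then have "0 < exchange_kernel \<xi> a b ?\<eta>"
    by (simp add: exchange_kernel_eq_card)
  also have "\<dots> \<le> (\<Sum>(x, y)\<in>E. exchange_kernel \<xi> x y ?\<eta>)"
    using member_le_sum[OF assms(2), of "\<lambda>(x, y). exchange_kernel \<xi> x y ?\<eta>"] assms(1)
    by (simp add: exchange_kernel_nonneg split_def)
  finally have "0 < (\<Sum>(x, y)\<in>E. exchange_kernel \<xi> x y ?\<eta>)" .
  moreover have "E \<noteq> {}" using assms(2) by blast
  ultimately show ?thesis
    using assms(1) by (simp add: ie_step_eq_exchange_kernel card_gt_0_iff)
qed

lemma closed_set_transfer_path:
  assumes G: "finite_connected_graph V E" and "S \<subseteq> configs V M"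
    and closed: "\<And>\<eta> \<xi>. \<eta> \<in> S \<Longrightarrow> \<xi> \<in> configs V M \<Longrightarrow> ie_step E \<eta> \<xi> > 0 \<Longrightarrow> \<xi> \<in> S"
    and "(a, b) \<in> E\<^sup>*" "\<eta> \<in> S" "1 \<le> \<eta> a"
  shows "transfer \<eta> a b \<in> S"
  using \<open>(a, b) \<in> E\<^sup>*\<close>
proof (induction rule: rtrancl_induct)
  case base
  then show ?case using \<open>\<eta> \<in> S\<close> by (simp add: transfer_def)
next
  case (step z b)
  let ?\<eta>' = "transfer \<eta> a z"
  have "z \<in> V" "b \<in> V" "z \<noteq> b"
    using finite_connected_graph_edge[OF G step.hyps(2)] by auto
  have "1 \<le> ?\<eta>' z"
    using \<open>1 \<le> \<eta> a\<close> by (cases "a = z") (simp_all add: transfer_def)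
  moreover have "?\<eta>' \<in> configs V M"
    using step.IH \<open>S \<subseteq> configs V M\<close> by blast
  ultimately have "transfer ?\<eta>' z b \<in> S"
    using closed[OF step.IH] ie_step_transfer_pos[OF finite_connected_graph_finite_edges[OF G] step.hyps(2)]
      transfer_in_configs[OF _ \<open>z \<in> V\<close> \<open>b \<in> V\<close>] G \<open>z \<noteq> b\<close>
    by (auto simp: finite_connected_graph_def)
  moreover have "transfer ?\<eta>' z b = transfer \<eta> a b"
    using \<open>z \<noteq> b\<close> \<open>1 \<le> \<eta> a\<close> by (auto simp: transfer_def fun_eq_iff)
  ultimately show ?case by simp
qed

lemma configs_exists_surplus:
  assumes "finite V" "\<xi> \<in> configs V M" "\<eta> \<in> configs V M" "\<eta> \<noteq> \<xi>"
  shows "\<exists>a\<in>V. \<xi> a < \<eta> a"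
proof (rule ccontr)
  assume "\<not> ?thesis"
  then have le: "\<forall>a\<in>V. \<eta> a \<le> \<xi> a" by auto
  obtain w where "\<eta> w \<noteq> \<xi> w"
    using \<open>\<eta> \<noteq> \<xi>\<close> by (meson ext)
  then have "w \<in> V"
    using assms(2,3) unfolding configs_def by (metis (mono_tags, lifting) mem_Collect_eq)
  then have "\<eta> w < \<xi> w"
    using le \<open>\<eta> w \<noteq> \<xi> w\<close> by (simp add: order_less_le)
  then have "sum \<eta> V < sum \<xi> V"
    using le \<open>w \<in> V\<close> by (intro sum_strict_mono_ex1[OF assms(1)]) auto
  then show False
    using assms(2,3) by (simp add: configs_def)
qed

lemma transfer_decreases_excess:
  assumes "finite V" "a \<in> V" "a \<noteq> b" "\<xi> a < \<eta> a" "\<eta> b < \<xi> b"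
  shows "(\<Sum>z\<in>V. transfer \<eta> a b z - \<xi> z) < (\<Sum>z\<in>V. \<eta> z - \<xi> z)"
proof (rule sum_strict_mono_ex1[OF assms(1)])
  show "\<forall>z\<in>V. transfer \<eta> a b z - \<xi> z \<le> \<eta> z - \<xi> z"
    using assms(3,5) by (auto simp: transfer_def)
  show "\<exists>z\<in>V. transfer \<eta> a b z - \<xi> z < \<eta> z - \<xi> z"
    using assms(2-4) by (auto simp: transfer_def)
qed

text \<open>Induction on the total excess over the target configuration: moving a unit from a
  vertex with surplus to one with deficit decreases it.\<close>
lemma irreducible_ie_step:
  assumes G: "finite_connected_graph V E"
  shows "irreducible_on (configs V M) (ie_step E)"
  unfolding irreducible_on_def
proof (intro allI impI)
  fix S assume S: "S \<subseteq> configs V M" "S \<noteq> {}"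
    and closed: "\<forall>\<eta>\<in>S. \<forall>\<xi>\<in>configs V M. ie_step E \<eta> \<xi> > 0 \<longrightarrow> \<xi> \<in> S"
  have "finite V" and connected: "\<And>x y. x \<in> V \<Longrightarrow> y \<in> V \<Longrightarrow> (x, y) \<in> E\<^sup>*"
    using G by (auto simp: finite_connected_graph_def)
  have "\<xi> \<in> S" if "\<xi> \<in> configs V M" for \<xi>
  proof -
    have "\<eta> \<in> S \<Longrightarrow> \<xi> \<in> S" for \<eta>
    proof (induction "\<Sum>z\<in>V. \<eta> z - \<xi> z" arbitrary: \<eta> rule: less_induct)
      case (less \<eta>)
      show ?case
      proof (cases "\<eta> = \<xi>")
        case False
        have "\<eta> \<in> configs V M" using less.prems S by blast
        then obtain a b where "a \<in> V" "\<xi> a < \<eta> a" "b \<in> V" "\<eta> b < \<xi> b"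
          using configs_exists_surplus[OF \<open>finite V\<close>] \<open>\<xi> \<in> configs V M\<close> False by metis
        then have "a \<noteq> b" by auto
        have "transfer \<eta> a b \<in> S"
          using closed_set_transfer_path[OF G S(1) _ connected[OF \<open>a \<in> V\<close> \<open>b \<in> V\<close>] less.prems]
            closed \<open>\<xi> a < \<eta> a\<close> by auto
        then show ?thesis
          using less.hyps transfer_decreases_excess[OF \<open>finite V\<close> \<open>a \<in> V\<close> \<open>a \<noteq> b\<close>]
            \<open>\<xi> a < \<eta> a\<close> \<open>\<eta> b < \<xi> b\<close> by blast
      qed (use less.prems in simp)
    qed
    then show ?thesis using S(2) by blast
  qed
  then show "S = configs V M" using S(1) by blast
qed

theorem lemma4:
  fixes V :: "'a set" and E :: "('a \<times> 'a) set" and N M :: nat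
  assumes "finite_connected_graph V E" and "card V = N"
  defines "\<pi>Y \<equiv> (\<lambda>\<xi>. mu V \<xi> / (\<Sum>\<eta>\<in>configs V M. mu V \<eta>))"
  shows "stationary V E M \<pi>Y \<and> reversible V E M \<pi>Y \<and>
         (\<forall>\<pi>. stationary V E M \<pi> \<longrightarrow> (\<forall>\<xi>\<in>configs V M. \<pi> \<xi> = \<pi>Y \<xi>))"
proof -
  let ?C = "configs V M"
  have "finite V" "V \<noteq> {}" using assms(1) by (auto simp: finite_connected_graph_def)
  then obtain v where "v \<in> V" by blast
  have "finite ?C" "?C \<noteq> {}"
    using finite_configs[OF \<open>finite V\<close>] configs_nonempty[OF \<open>finite V\<close> \<open>v \<in> V\<close>] .
  have "mu V \<xi> > 0" for \<xi> by (simp add: mu_def prod_pos)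
  note \<pi>Y = normalized_reversible_weight_unique_stationary[OF \<open>finite ?C\<close> \<open>?C \<noteq> {}\<close>
      irreducible_ie_step[OF assms(1)] ie_step_nonneg ie_step_row_sum[OF assms(1)]
      mu_ie_step_balance[OF assms(1)] this]
  have "stationary V E M \<pi>Y"
    unfolding stationary_def \<pi>Y_def using \<pi>Y(1,2,4) by (auto intro: less_imp_le)
  moreover have "reversible V E M \<pi>Y"
    unfolding reversible_def \<pi>Y_def using \<pi>Y(3) by blast
  moreover have "\<forall>\<xi>\<in>?C. \<pi> \<xi> = \<pi>Y \<xi>" if "stationary V E M \<pi>" for \<pi>
    using that unfolding stationary_def \<pi>Y_def by (blast intro: \<pi>Y(5))
  ultimately show ?thesis by blast
qed

end
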